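(* Consider the setting and the primal–dual iteration described in the context, with all dual variables initialized at zero: $\bm{U}_{i,j,k}^{(0)}=\bm{V}_{i,j,k}^{(0)}=\bm{0}$ for all $i\in\mathcal{V}$, $j\in\mathcal{N}_i$, $1\le k\le K$. Then for every $t\ge 0$ and all $i\in\mathcal{V}$, $j\in\mathcal{N}_i$, $k$, one has $\bm{U}_{i,j,k}^{(t)}=\bm{V}_{j,i,k}^{(t)}$, so that $\bm{Y}_{i,j,k}^{(t)}:=\bm{U}_{i,j,k}^{(t)}+\bm{V}_{j,i,k}^{(t)}=2\bm{U}_{i,j,k}^{(t)}$ satisfies $\bm{Y}_{i,j,k}^{(0)}=\bm{0}$ and, for $t\ge 1$, $$\bm{Y}_{i,j,k}^{(t)}=\bm{Y}_{i,j,k}^{(t-1)}+\rho\Big[\frac{\bm{Z}_{i,k}^{(t-1)}{\bm{Z}_{i,k}^{(t-1)}}^T}{m_{i,k}}-\frac{\bm{Z}_{j,k}^{(t-1)}{\bm{Z}_{j,k}^{(t-1)}}^T}{m_{j,k}}\Big];$$ moreover the primal step decouples across nodes: a feasible $\bm{Z}=(\bm{Z}_1,\dots,\bm{Z}_N)$ minimizes $\mathcal{L}(\bm{U}^{(t)},\bm{V}^{(t)},\bm{Z},\bm{T}^{(t-1)})$ over the feasible set if and only if, for every $i$, $\bm{Z}_i$ minimizes over $\{\bm{Z}_i:\|\bm{Z}_{i,k}\|_F^2=m_{i,k}\ \forall k\}$ the function $$\mathcal{L}'(\bm{Y}_i^{(t)},\bm{Z}_i)=R_i^c(\bm{Z}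_i)-R_i(\bm{Z}_i)+\sum_{j\in\mathcal{N}_i}\sum_{k=1}^K\Big\{\mathrm{tr}\Big[{\bm{Y}_{i,j,k}^{(t)}}^T\Big(\frac{\bm{Z}_{i,k}\bm{Z}_{i,k}^T}{m_{i,k}}-\frac{\bm{Z}_{j,k}^{(t-1)}{\bm{Z}_{j,k}^{(t-1)}}^T}{m_{j,k}}\Big)\Big]+\gamma\Big\|\frac{\bm{Z}_{i,k}\bm{Z}_{i,k}^T}{m_{i,k}}-\frac{1}{2}\Big(\frac{\bm{Z}_{i,k}^{(t-1)}{\bm{Z}_{i,k}^{(t-1)}}^T}{m_{i,k}}+\frac{\bm{Z}_{j,k}^{(t-1)}{\bm{Z}_{j,k}^{(t-1)}}^T}{m_{j,k}}\Big)\Big\|_F^2\Big\}.$$ Hence the iteration reduces to the two steps above ($\bm{Y}$-update, then per-node minimization of $\mathcal{L}'$), which can be carried out in parallel across nodes.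
   Context: Let $\mathcal{G}=(\mathcal{V},\mathcal{E})$ be a connected undirected graph with $\mathcal{V}=\{1,\dots,N\}$ and neighbor sets $\mathcal{N}_i$. Node $i$ holds a matrix $\bm{Z}_i\in\mathbb{R}^{d\times m_i}$ whose columns carry labels in $\{1,\dots,K\}$; $\bm{Z}_{i,k}\in\mathbb{R}^{d\times m_{i,k}}$ is the submatrix of columns with label $k$, and $m_{i,k}\ge 1$. Let $m=\sum_i m_i$, $\epsilon>0$, and $R_i(\bm{Z}_i)=\frac{m_i}{2m}\log\det(\bm{I}+\frac{d}{m_i\epsilon^2}\bm{Z}_i\bm{Z}_i^T)$, $R_i^c(\bm{Z}_i)=\sum_{k=1}^K\frac{m_{i,k}}{2m}\log\det(\bm{I}+\frac{d}{m_{i,k}\epsilon^2}\bm{Z}_{i,k}\bm{Z}_{i,k}^T)$. Feasible $\bm{Z}$ means $\|\bm{Z}_{i,k}\|_F^2=m_{i,k}$ for all $i,k$. For each $i\in\mathcal{V}$, $j\in\mathcal{N}_i$, $k$, there are auxiliary $d\times d$ variables $\bm{T}_{i,j,k}$ and dual variables $\bm{U}_{i,j,k},\bm{V}_{i,j,k}$, associated with the constraints $\bm{Z}_{i,k}\bm{Z}_{i,k}^T/m_{i,k}=\bm{T}_{i,j,k}$ and $\bm{Z}_{j,k}\bm{Z}_{j,k}^T/m_{j,k}=\bm{T}_{i,j,k}$. The augmented Lagrangian (penalty $\gamma>0$) is $\mathcal{L}(\bm{Z},\bm{T},\bm{U},\bm{V})=\sum_{i=1}^N\Big\{R_i^c(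\bm{Z}_i)-R_i(\bm{Z}_i)+\sum_{j\in\mathcal{N}_i}\sum_{k=1}^K\big(\mathrm{tr}[\bm{U}_{i,j,k}^T(\frac{\bm{Z}_{i,k}\bm{Z}_{i,k}^T}{m_{i,k}}-\bm{T}_{i,j,k})]+\mathrm{tr}[\bm{V}_{i,j,k}^T(\frac{\bm{Z}_{j,k}\bm{Z}_{j,k}^T}{m_{j,k}}-\bm{T}_{i,j,k})]\big)+\frac{\gamma}{2}\sum_{j\in\mathcal{N}_i}\sum_{k=1}^K\big[\|\frac{\bm{Z}_{i,k}\bm{Z}_{i,k}^T}{m_{i,k}}-\bm{T}_{i,j,k}\|_F^2+\|\frac{\bm{Z}_{j,k}\bm{Z}_{j,k}^T}{m_{j,k}}-\bm{T}_{i,j,k}\|_F^2\big]\Big\}$. Iteration (dual step size $\rho>0$): start from a feasible $\bm{Z}^{(0)}$ and zero duals, with $\bm{T}^{(0)}$ given by the $\bm{T}$-step below at $t=0$. For $t\ge1$: $\bm{U}_{i,j,k}^{(t)}=\bm{U}_{i,j,k}^{(t-1)}+\rho[\bm{Z}_{i,k}^{(t-1)}{\bm{Z}_{i,k}^{(t-1)}}^T/m_{i,k}-\bm{T}_{i,j,k}^{(t-1)}]$; $\bm{V}_{i,j,k}^{(t)}=\bm{V}_{i,j,k}^{(t-1)}+\rho[\bm{Z}_{j,k}^{(t-1)}{\bm{Z}_{j,k}^{(t-1)}}^T/m_{j,k}-\bm{T}_{i,j,k}^{(t-1)}]$; $\bm{Z}^{(t)}\in\arg\min_{\bm{Z}\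 \text{feasible}}\mathcal{L}(\bm{U}^{(t)},\bm{V}^{(t)},\bm{Z},\bm{T}^{(t-1)})$; $\bm{T}_{i,j,k}^{(t)}=\arg\min_{\bm{T}}\{-\mathrm{tr}[(\bm{U}_{i,j,k}^{(t)}+\bm{V}_{i,j,k}^{(t)})^T\bm{T}]+\frac{\gamma}{2}[\|\bm{Z}_{i,k}^{(t)}{\bm{Z}_{i,k}^{(t)}}^T/m_{i,k}-\bm{T}\|_F^2+\|\bm{Z}_{j,k}^{(t)}{\bm{Z}_{j,k}^{(t)}}^T/m_{j,k}-\bm{T}\|_F^2]\}$. $\bm{Y}_i^{(t)}$ denotes the collection $\{\bm{Y}_{i,j,k}^{(t)}\}_{j\in\mathcal{N}_i,k}$. *)

theory Defs
  imports Complex_Main "Jordan_Normal_Form.Determinant" "Jordan_Normal_Form.DL_Submatrix"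
begin

(* Graph: vertex set {1..N}, neighbour sets Nb i. Labels {1..K}.
   Node i: matrix Z_i with d rows and m i columns, column c has label lab i c. *)

definition mtr :: "real mat \<Rightarrow> real" where
  "mtr A = (\<Sum>r<dim_row A. A $$ (r, r))"

definition fro2 :: "real mat \<Rightarrow> real" where
  "fro2 A = (\<Sum>r<dim_row A. \<Sum>c<dim_col A. (A $$ (r, c))\<^sup>2)"

definition conn_undirected :: "nat \<Rightarrow> (nat \<Rightarrow> nat set) \<Rightarrow> bool" where
  "conn_undirected N Nb \<longleftrightarrow>
     (\<forall>i\<in>{1..N}. Nb i \<subseteq> {1..N} - {i}) \<and>
     (\<forall>i\<in>{1..N}. \<forall>j\<in>{1..N}. j \<in> Nb i \<longleftrightarrow> i \<in> Nb j) \<and>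
     (\<forall>i\<in>{1..N}. \<forall>j\<in>{1..N}. (i, j) \<in> {(a, b). a \<in> {1..N} \<and> b \<in> Nb a}\<^sup>*)"

definition mk :: "(nat \<Rightarrow> nat) \<Rightarrow> (nat \<Rightarrow> nat \<Rightarrow> nat) \<Rightarrow> nat \<Rightarrow> nat \<Rightarrow> nat" where
  "mk m lab i k = card {c. c < m i \<and> lab i c = k}"

definition blk :: "(nat \<Rightarrow> nat \<Rightarrow> nat) \<Rightarrow> nat \<Rightarrow> real mat \<Rightarrow> nat \<Rightarrow> real mat" where
  "blk lab i Zi k = submatrix Zi UNIV {c. lab i c = k}"

definition Anrm :: "(nat \<Rightarrow> nat) \<Rightarrow> (nat \<Rightarrow> nat \<Rightarrow> nat) \<Rightarrow> nat \<Rightarrow> real mat \<Rightarrow> nat \<Rightarrow> real mat" where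
  "Anrm m lab i Zi k = (1 / real (mk m lab i k)) \<cdot>\<^sub>m (blk lab i Zi k * transpose_mat (blk lab i Zi k))"

definition msum :: "nat \<Rightarrow> (nat \<Rightarrow> nat) \<Rightarrow> nat" where
  "msum N m = (\<Sum>i\<in>{1..N}. m i)"

definition Rterm :: "nat \<Rightarrow> real \<Rightarrow> nat \<Rightarrow> nat \<Rightarrow> real mat \<Rightarrow> real" where
  "Rterm d eps mtot n W =
     (real n / (2 * real mtot)) *
       ln (det (1\<^sub>m d + (real d / (real n * eps\<^sup>2)) \<cdot>\<^sub>m (W * transpose_mat W)))"

definition Ri :: "nat \<Rightarrow> real \<Rightarrow> nat \<Rightarrow> (nat \<Rightarrow> nat) \<Rightarrow> nat \<Rightarrow> real mat \<Rightarrow> real" where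
  "Ri d eps N m i Zi = Rterm d eps (msum N m) (m i) Zi"

definition Ric :: "nat \<Rightarrow> real \<Rightarrow> nat \<Rightarrow> nat \<Rightarrow> (nat \<Rightarrow> nat) \<Rightarrow> (nat \<Rightarrow> nat \<Rightarrow> nat) \<Rightarrow> nat \<Rightarrow> real mat \<Rightarrow> real" where
  "Ric d eps N K m lab i Zi =
     (\<Sum>k\<in>{1..K}. Rterm d eps (msum N m) (mk m lab i k) (blk lab i Zi k))"

definition feas_node :: "nat \<Rightarrow> nat \<Rightarrow> (nat \<Rightarrow> nat) \<Rightarrow> (nat \<Rightarrow> nat \<Rightarrow> nat) \<Rightarrow> nat \<Rightarrow> real mat \<Rightarrow> bool" where
  "feas_node d K m lab i Zi \<longleftrightarrow> Zi \<in> carrier_mat d (m i) \<and>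
     (\<forall>k\<in>{1..K}. fro2 (blk lab i Zi k) = real (mk m lab i k))"

definition feas :: "nat \<Rightarrow> nat \<Rightarrow> nat \<Rightarrow> (nat \<Rightarrow> nat) \<Rightarrow> (nat \<Rightarrow> nat \<Rightarrow> nat) \<Rightarrow> (nat \<Rightarrow> real mat) \<Rightarrow> bool" where
  "feas d N K m lab Z \<longleftrightarrow> (\<forall>i\<in>{1..N}. feas_node d K m lab i (Z i))"

definition Lag :: "nat \<Rightarrow> real \<Rightarrow> real \<Rightarrow> nat \<Rightarrow> (nat \<Rightarrow> nat set) \<Rightarrow> nat \<Rightarrow> (nat \<Rightarrow> nat) \<Rightarrow> (nat \<Rightarrow> nat \<Rightarrow> nat)
     \<Rightarrow> (nat \<Rightarrow> real mat) \<Rightarrow> (nat \<Rightarrow> nat \<Rightarrow> nat \<Rightarrow> real mat) \<Rightarrow> (nat \<Rightarrow> nat \<Rightarrow> nat \<Rightarrow> real mat)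
     \<Rightarrow> (nat \<Rightarrow> nat \<Rightarrow> nat \<Rightarrow> real mat) \<Rightarrow> real" where
  "Lag d eps \<gamma> N Nb K m lab Z T U V =
     (\<Sum>i\<in>{1..N}.
        Ric d eps N K m lab i (Z i) - Ri d eps N m i (Z i)
        + (\<Sum>j\<in>Nb i. \<Sum>k\<in>{1..K}.
             mtr (transpose_mat (U i j k) * (Anrm m lab i (Z i) k - T i j k))
           + mtr (transpose_mat (V i j k) * (Anrm m lab j (Z j) k - T i j k)))
        + (\<gamma> / 2) * (\<Sum>j\<in>Nb i. \<Sum>k\<in>{1..K}.
             fro2 (Anrm m lab i (Z i) k - T i j k) + fro2 (Anrm m lab j (Z j) k - T i j k)))"

definition Tobj :: "real \<Rightarrow> (nat \<Rightarrow> nat) \<Rightarrow> (nat \<Rightarrow> nat \<Rightarrow> nat) \<Rightarrow> (nat \<Rightarrow> real mat)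
     \<Rightarrow> (nat \<Rightarrow> nat \<Rightarrow> nat \<Rightarrow> real mat) \<Rightarrow> (nat \<Rightarrow> nat \<Rightarrow> nat \<Rightarrow> real mat)
     \<Rightarrow> nat \<Rightarrow> nat \<Rightarrow> nat \<Rightarrow> real mat \<Rightarrow> real" where
  "Tobj \<gamma> m lab Z U V i j k T =
     - mtr (transpose_mat (U i j k + V i j k) * T)
     + (\<gamma> / 2) * (fro2 (Anrm m lab i (Z i) k - T) + fro2 (Anrm m lab j (Z j) k - T))"

(* L'(Y_i, Z_i); Zold = Z^{(t-1)}, Yi j k = Y_{i,j,k} *)
definition Lloc :: "nat \<Rightarrow> real \<Rightarrow> real \<Rightarrow> nat \<Rightarrow> (nat \<Rightarrow> nat set) \<Rightarrow> nat \<Rightarrow> (nat \<Rightarrow> nat) \<Rightarrow> (nat \<Rightarrow> nat \<Rightarrow> nat)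
     \<Rightarrow> (nat \<Rightarrow> real mat) \<Rightarrow> nat \<Rightarrow> (nat \<Rightarrow> nat \<Rightarrow> real mat) \<Rightarrow> real mat \<Rightarrow> real" where
  "Lloc d eps \<gamma> N Nb K m lab Zold i Yi Zi =
     Ric d eps N K m lab i Zi - Ri d eps N m i Zi
     + (\<Sum>j\<in>Nb i. \<Sum>k\<in>{1..K}.
          mtr (transpose_mat (Yi j k) * (Anrm m lab i Zi k - Anrm m lab j (Zold j) k))
        + \<gamma> * fro2 (Anrm m lab i Zi k
              - (1/2) \<cdot>\<^sub>m (Anrm m lab i (Zold i) k + Anrm m lab j (Zold j) k)))"

end

theory Submission
  imports Defs
begin

text \<open>With zero initial duals, \<open>U t i j k + V t i j k = 0\<close> is invariant: while it holds, the linear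
  term of the \<open>T\<close>-step vanishes, so \<open>T t i j k\<close> is the midpoint of the two normalised Gram
  matrices and the two dual increments are opposite. The midpoint is symmetric in \<open>i, j\<close>, so
  \<open>U t i j k\<close> and \<open>V t j i k\<close> receive the same increment and stay equal, which gives the
  recursion for \<open>Y\<close>. For the \<open>Z\<close>-step, re-indexing the \<open>V\<close>-terms of the augmented Lagrangian
  over reversed edges makes every term depend on a single \<open>Z i\<close>; merging the two dual terms of
  an edge and recentring them at the neighbour's previous Gram matrix gives \<open>Lloc\<close> up to a
  constant independent of \<open>Z\<close>, so the minimisation splits across nodes.\<close>

lemma mtr_transpose_mult:
  assumes "A \<in> carrier_mat n m" "B \<in> carrier_mat n m"
  shows "mtr (transpose_mat A * B) = (\<Sum>r<n. \<Sum>c<m. A $$ (r, c) * B $$ (r, c))"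
proof -
  have "mtr (transpose_mat A * B) = (\<Sum>c<m. \<Sum>r<n. A $$ (r, c) * B $$ (r, c))"
    using assms by (auto simp: mtr_def scalar_prod_def atLeast0LessThan intro!: sum.cong)
  then show ?thesis by (simp add: sum.swap[of _ "{..<m}"])
qed

lemma fro2_diff:
  assumes "A \<in> carrier_mat n m" "B \<in> carrier_mat n m"
  shows "fro2 (A - B) = (\<Sum>r<n. \<Sum>c<m. (A $$ (r, c) - B $$ (r, c))\<^sup>2)"
  using assms by (auto simp: fro2_def intro!: sum.cong)

lemma fro2_nonneg: "fro2 A \<ge> 0"
  by (simp add: fro2_def sum_nonneg)

lemma fro2_diff_eq_0_iff:
  assumes "A \<in> carrier_mat n m" "B \<in> carrier_mat n m"
  shows "fro2 (A - B) = 0 \<longleftrightarrow> A = B"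
proof -
  have "fro2 (A - B) = 0 \<longleftrightarrow> (\<forall>r<n. \<forall>c<m. A $$ (r, c) = B $$ (r, c))"
    using assms by (auto simp: fro2_diff sum_nonneg_eq_0_iff sum_nonneg)
  also have "\<dots> \<longleftrightarrow> A = B"
    using assms by (auto intro: eq_matI)
  finally show ?thesis .
qed

lemma mtr_transpose_mult_add_left:
  assumes "A \<in> carrier_mat n m" "B \<in> carrier_mat n m" "C \<in> carrier_mat n m"
  shows "mtr (transpose_mat (A + B) * C) = mtr (transpose_mat A * C) + mtr (transpose_mat B * C)"
  using assms mtr_transpose_mult[of "A + B" n m C]
  by (simp add: mtr_transpose_mult distrib_right sum.distrib)

lemma mtr_transpose_mult_diff_right:
  assumes "A \<in> carrier_mat n m" "B \<in> carrier_mat n m" "C \<in> carrier_mat n m"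
  shows "mtr (transpose_mat A * (B - C)) = mtr (transpose_mat A * B) - mtr (transpose_mat A * C)"
proof -
  have "mtr (transpose_mat A * (B - C)) = (\<Sum>r<n. \<Sum>c<m. A $$ (r, c) * (B - C) $$ (r, c))"
    using assms by (intro mtr_transpose_mult) auto
  then show ?thesis
    using assms by (simp add: mtr_transpose_mult right_diff_distrib sum_subtractf)
qed

lemma argmin_linear_plus_squared_distances:
  fixes P Q W X :: "real mat" and \<gamma> :: real
  assumes "\<gamma> > 0"
    and carrier: "P \<in> carrier_mat n m" "Q \<in> carrier_mat n m" "W \<in> carrier_mat n m" "X \<in> carrier_mat n m"
    and min: "\<forall>T\<in>carrier_mat n m.
      - mtr (transpose_mat W * X) + \<gamma> / 2 * (fro2 (P - X) + fro2 (Q - X))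
      \<le> - mtr (transpose_mat W * T) + \<gamma> / 2 * (fro2 (P - T) + fro2 (Q - T))"
  shows "X = (1/2) \<cdot>\<^sub>m (P + Q) + (1 / (2 * \<gamma>)) \<cdot>\<^sub>m W"
proof -
  define f where "f T = - mtr (transpose_mat W * T) + \<gamma> / 2 * (fro2 (P - T) + fro2 (Q - T))" for T
  define C where "C = (1/2) \<cdot>\<^sub>m (P + Q) + (1 / (2 * \<gamma>)) \<cdot>\<^sub>m W"
  have C: "C \<in> carrier_mat n m"
    using carrier by (simp add: C_def)
  have entrywise: "f T = (\<Sum>r<n. \<Sum>c<m. - W $$ (r, c) * T $$ (r, c)
      + \<gamma> / 2 * ((P $$ (r, c) - T $$ (r, c))\<^sup>2 + (Q $$ (r, c) - T $$ (r, c))\<^sup>2))"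
    if "T \<in> carrier_mat n m" for T
    using carrier that unfolding f_def
    by (simp only: mtr_transpose_mult fro2_diff
        sum.distrib sum_negf distrib_left sum_distrib_left mult_minus_left)
  have "f T = f C + \<gamma> * fro2 (T - C)" if T: "T \<in> carrier_mat n m" for T
  proof -
    let ?h = "\<lambda>r c x. - W $$ (r, c) * x
      + \<gamma> / 2 * ((P $$ (r, c) - x)\<^sup>2 + (Q $$ (r, c) - x)\<^sup>2)"
    have "f T = (\<Sum>r<n. \<Sum>c<m. ?h r c (C $$ (r, c)) + \<gamma> * (T $$ (r, c) - C $$ (r, c))\<^sup>2)"
      unfolding entrywise[OF T] using carrier T \<open>\<gamma> > 0\<close>
      by (intro sum.cong refl) (simp add: C_def field_simps power2_eq_square)
    also have "\<dots> = f C + \<gamma> * fro2 (T - C)"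
      using T C by (simp add: entrywise fro2_diff sum.distrib sum_distrib_left)
    finally show ?thesis .
  qed
  moreover have "f X \<le> f C"
    using min C by (simp add: f_def)
  ultimately have "fro2 (X - C) \<le> 0"
    using carrier \<open>\<gamma> > 0\<close> by (simp add: mult_le_0_iff)
  then show ?thesis
    using fro2_nonneg[of "X - C"] fro2_diff_eq_0_iff[OF carrier(4) C] by (simp add: C_def)
qed

lemma minimizer_of_separable_sum_iff:
  fixes F :: "('i \<Rightarrow> 'a) \<Rightarrow> real" and L :: "'i \<Rightarrow> 'a \<Rightarrow> real"
  assumes "finite I"
    and F: "\<And>Z. \<forall>i\<in>I. S i (Z i) \<Longrightarrow> F Z = (\<Sum>i\<in>I. L i (Z i)) + c"
    and Z: "\<forall>i\<in>I. S i (Z i)"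
  shows "(\<forall>Z'. (\<forall>i\<in>I. S i (Z' i)) \<longrightarrow> F Z \<le> F Z')
     \<longleftrightarrow> (\<forall>i\<in>I. \<forall>z. S i z \<longrightarrow> L i (Z i) \<le> L i z)"
proof (intro iffI allI ballI impI)
  fix i z assume min: "\<forall>Z'. (\<forall>i\<in>I. S i (Z' i)) \<longrightarrow> F Z \<le> F Z'" and "i \<in> I" "S i z"
  let ?Z = "Z(i := z)"
  have S: "\<forall>l\<in>I. S l (?Z l)"
    using Z \<open>S i z\<close> by simp
  then have "F Z \<le> F ?Z"
    using min by blast
  then have "(\<Sum>l\<in>I. L l (Z l)) \<le> (\<Sum>l\<in>I. L l (?Z l))"
    by (simp only: F[OF Z] F[OF S])
  moreover have "(\<Sum>l\<in>I - {i}. L l (?Z l)) = (\<Sum>l\<in>I - {i}. L l (Z l))"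
    by (intro sum.cong) auto
  ultimately show "L i (Z i) \<le> L i z"
    using \<open>i \<in> I\<close> \<open>finite I\<close> by (simp add: sum.remove)
next
  fix Z' assume "\<forall>i\<in>I. \<forall>z. S i z \<longrightarrow> L i (Z i) \<le> L i z" and "\<forall>i\<in>I. S i (Z' i)"
  then show "F Z \<le> F Z'"
    using F[of Z] F[of Z'] Z by (simp add: sum_mono)
qed

lemma sum_neighbours_swap:
  assumes "finite A" "\<And>i. i \<in> A \<Longrightarrow> Nb i \<subseteq> A" "\<And>i j. i \<in> A \<Longrightarrow> j \<in> A \<Longrightarrow> j \<in> Nb i \<longleftrightarrow> i \<in> Nb j"
  shows "(\<Sum>i\<in>A. \<Sum>j\<in>Nb i. f i j) = (\<Sum>i\<in>A. \<Sum>j\<in>Nb i. f j i)"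
proof -
  have "Nb i = {j \<in> A. j \<in> Nb i}" "Nb i = {j \<in> A. i \<in> Nb j}" if "i \<in> A" for i
    using assms that by auto
  then show ?thesis
    using sum.swap_restrict[OF \<open>finite A\<close> \<open>finite A\<close>, of f "\<lambda>i j. j \<in> Nb i"]
    by (simp cong: sum.cong)
qed

lemma dual_terms_merge:
  fixes \<gamma> :: real
  assumes "U \<in> carrier_mat n m" "V \<in> carrier_mat n m" "X \<in> carrier_mat n m"
    "A \<in> carrier_mat n m" "T \<in> carrier_mat n m"
  shows "mtr (transpose_mat U * (X - T)) + \<gamma> / 2 * fro2 (X - T)
      + (mtr (transpose_mat V * (X - T)) + \<gamma> / 2 * fro2 (X - T))
    = mtr (transpose_mat (U + V) * (X - A)) + \<gamma> * fro2 (X - T)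
      + mtr (transpose_mat (U + V) * (A - T))"
proof -
  have UV: "U + V \<in> carrier_mat n m"
    using assms by (simp add: add_carrier_mat)
  have "mtr (transpose_mat (U + V) * (X - T))
      = mtr (transpose_mat U * (X - T)) + mtr (transpose_mat V * (X - T))"
    using assms by (intro mtr_transpose_mult_add_left) (auto simp: minus_carrier_mat)
  moreover have "mtr (transpose_mat (U + V) * (X - T))
      = mtr (transpose_mat (U + V) * (X - A)) + mtr (transpose_mat (U + V) * (A - T))"
    using mtr_transpose_mult_diff_right[OF UV assms(3,5)]
      mtr_transpose_mult_diff_right[OF UV assms(3,4)]
      mtr_transpose_mult_diff_right[OF UV assms(4,5)] by linarith
  ultimately show ?thesis
    by linarith
qed

lemma midpoint_residuals_cancel:
  fixes U V A B :: "real mat"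
  assumes "U \<in> carrier_mat n m" "V \<in> carrier_mat n m" "A \<in> carrier_mat n m" "B \<in> carrier_mat n m"
    and "U + V = 0\<^sub>m n m"
  defines "M \<equiv> (1/2) \<cdot>\<^sub>m (A + B)"
  shows "(U + \<rho> \<cdot>\<^sub>m (A - M)) + (V + \<rho> \<cdot>\<^sub>m (B - M)) = 0\<^sub>m n m"
proof (rule eq_matI)
  fix r c assume rc: "r < dim_row (0\<^sub>m n m :: real mat)" "c < dim_col (0\<^sub>m n m :: real mat)"
  have "U $$ (r, c) + V $$ (r, c) = 0"
    using arg_cong[OF \<open>U + V = 0\<^sub>m n m\<close>, of "\<lambda>A. A $$ (r, c)"] assms(1,2) rc by simp
  then show "((U + \<rho> \<cdot>\<^sub>m (A - M)) + (V + \<rho> \<cdot>\<^sub>m (B - M))) $$ (r, c) = 0\<^sub>m n m $$ (r, c)"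
    using assms(1-4) rc unfolding M_def by (simp add: algebra_simps)
qed (use assms(1-4) in \<open>simp_all add: M_def\<close>)

lemma Lag_regroup_by_node:
  assumes "\<And>i. i \<in> {1..N} \<Longrightarrow> Nb i \<subseteq> {1..N}"
    and "\<And>i j. i \<in> {1..N} \<Longrightarrow> j \<in> {1..N} \<Longrightarrow> j \<in> Nb i \<longleftrightarrow> i \<in> Nb j"
  shows "Lag d eps \<gamma> N Nb K m lab Z T U V
    = (\<Sum>i\<in>{1..N}. Ric d eps N K m lab i (Z i) - Ri d eps N m i (Z i)
        + (\<Sum>j\<in>Nb i. \<Sum>k\<in>{1..K}.
            mtr (transpose_mat (U i j k) * (Anrm m lab i (Z i) k - T i j k))
              + \<gamma> / 2 * fro2 (Anrm m lab i (Z i) k - T i j k)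
            + (mtr (transpose_mat (V j i k) * (Anrm m lab i (Z i) k - T j i k))
              + \<gamma> / 2 * fro2 (Anrm m lab i (Z i) k - T j i k))))"
proof -
  define R where "R i = Ric d eps N K m lab i (Z i) - Ri d eps N m i (Z i)" for i
  define F where "F i j = (\<Sum>k\<in>{1..K}. mtr (transpose_mat (U i j k) * (Anrm m lab i (Z i) k - T i j k))
    + \<gamma> / 2 * fro2 (Anrm m lab i (Z i) k - T i j k))" for i j
  define G where "G i j = (\<Sum>k\<in>{1..K}. mtr (transpose_mat (V i j k) * (Anrm m lab j (Z j) k - T i j k))
    + \<gamma> / 2 * fro2 (Anrm m lab j (Z j) k - T i j k))" for i j
  have "Lag d eps \<gamma> N Nb K m lab Z T U V = (\<Sum>i\<in>{1..N}. R i + (\<Sum>j\<in>Nb i. F i j + G i j))"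
    unfolding Lag_def R_def F_def G_def
    by (intro sum.cong refl) (simp add: sum.distrib sum_distrib_left algebra_simps)
  also have "\<dots> = (\<Sum>i\<in>{1..N}. R i) + (\<Sum>i\<in>{1..N}. \<Sum>j\<in>Nb i. F i j)
      + (\<Sum>i\<in>{1..N}. \<Sum>j\<in>Nb i. G i j)"
    by (simp add: sum.distrib)
  also have "(\<Sum>i\<in>{1..N}. \<Sum>j\<in>Nb i. G i j) = (\<Sum>i\<in>{1..N}. \<Sum>j\<in>Nb i. G j i)"
    using assms by (intro sum_neighbours_swap) auto
  also have "(\<Sum>i\<in>{1..N}. R i) + (\<Sum>i\<in>{1..N}. \<Sum>j\<in>Nb i. F i j)
      + (\<Sum>i\<in>{1..N}. \<Sum>j\<in>Nb i. G j i) = (\<Sum>i\<in>{1..N}. R i + (\<Sum>j\<in>Nb i. F i j + G j i))"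
    by (simp add: sum.distrib)
  finally show ?thesis
    unfolding R_def F_def G_def by (simp add: sum.distrib)
qed

lemma Anrm_carrier: "Zi \<in> carrier_mat d n \<Longrightarrow> Anrm m lab i Zi k \<in> carrier_mat d d"
  by (auto simp: Anrm_def blk_def dim_submatrix)

locale admm_iteration =
  fixes N K d :: nat and Nb :: "nat \<Rightarrow> nat set"
    and m :: "nat \<Rightarrow> nat" and lab :: "nat \<Rightarrow> nat \<Rightarrow> nat"
    and \<gamma> \<rho> :: real
    and Zs :: "nat \<Rightarrow> nat \<Rightarrow> real mat"
    and T U V :: "nat \<Rightarrow> nat \<Rightarrow> nat \<Rightarrow> nat \<Rightarrow> real mat"
  assumes neighbours_subset: "i \<in> {1..N} \<Longrightarrow> Nb i \<subseteq> {1..N}"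
    and neighbours_symmetric: "i \<in> {1..N} \<Longrightarrow> j \<in> {1..N} \<Longrightarrow> j \<in> Nb i \<longleftrightarrow> i \<in> Nb j"
    and gamma_pos: "\<gamma> > 0"
    and iterates_feasible: "feas d N K m lab (Zs t)"
    and U_0: "i \<in> {1..N} \<Longrightarrow> j \<in> Nb i \<Longrightarrow> k \<in> {1..K} \<Longrightarrow> U 0 i j k = 0\<^sub>m d d"
    and V_0: "i \<in> {1..N} \<Longrightarrow> j \<in> Nb i \<Longrightarrow> k \<in> {1..K} \<Longrightarrow> V 0 i j k = 0\<^sub>m d d"
    and T_carrier: "i \<in> {1..N} \<Longrightarrow> j \<in> Nb i \<Longrightarrow> k \<in> {1..K} \<Longrightarrow> T t i j k \<in> carrier_mat d d"
    and T_minimal: "i \<in> {1..N} \<Longrightarrow> j \<in> Nb i \<Longrightarrow> k \<in> {1..K} \<Longrightarrow> T' \<in> carrier_mat d d \<Longrightarrow>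
      Tobj \<gamma> m lab (Zs t) (U t) (V t) i j k (T t i j k) \<le> Tobj \<gamma> m lab (Zs t) (U t) (V t) i j k T'"
    and U_step: "i \<in> {1..N} \<Longrightarrow> j \<in> Nb i \<Longrightarrow> k \<in> {1..K} \<Longrightarrow>
      U (Suc t) i j k = U t i j k + \<rho> \<cdot>\<^sub>m (Anrm m lab i (Zs t i) k - T t i j k)"
    and V_step: "i \<in> {1..N} \<Longrightarrow> j \<in> Nb i \<Longrightarrow> k \<in> {1..K} \<Longrightarrow>
      V (Suc t) i j k = V t i j k + \<rho> \<cdot>\<^sub>m (Anrm m lab j (Zs t j) k - T t i j k)"
begin

abbreviation gram :: "nat \<Rightarrow> nat \<Rightarrow> nat \<Rightarrow> real mat" where
  "gram t i k \<equiv> Anrm m lab i (Zs t i) k"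

abbreviation Y :: "nat \<Rightarrow> nat \<Rightarrow> nat \<Rightarrow> nat \<Rightarrow> real mat" where
  "Y t i j k \<equiv> U t i j k + V t j i k"

lemma neighbour_in_nodes: "i \<in> {1..N} \<Longrightarrow> j \<in> Nb i \<Longrightarrow> j \<in> {1..N}"
  using neighbours_subset by blast

lemma neighbour_converse: "i \<in> {1..N} \<Longrightarrow> j \<in> Nb i \<Longrightarrow> i \<in> Nb j"
  using neighbours_symmetric neighbour_in_nodes by blast

lemma gram_carrier: "i \<in> {1..N} \<Longrightarrow> gram t i k \<in> carrier_mat d d"
  using iterates_feasible[of t] by (auto simp: feas_def feas_node_def intro: Anrm_carrier)

lemma T_step_if_duals_cancel:
  assumes "i \<in> {1..N}" "j \<in> Nb i" "k \<in> {1..K}" and "U t i j k + V t i j k = 0\<^sub>m d d"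
  shows "T t i j k = (1/2) \<cdot>\<^sub>m (gram t i k + gram t j k)"
proof -
  have grams: "gram t i k \<in> carrier_mat d d" "gram t j k \<in> carrier_mat d d"
    using gram_carrier assms(1) neighbour_in_nodes[OF assms(1,2)] by auto
  have "T t i j k = (1/2) \<cdot>\<^sub>m (gram t i k + gram t j k) + (1 / (2 * \<gamma>)) \<cdot>\<^sub>m (U t i j k + V t i j k)"
    by (rule argmin_linear_plus_squared_distances[OF gamma_pos grams _ T_carrier[OF assms(1-3)]])
      (simp add: assms(4), use T_minimal[OF assms(1-3)] in \<open>simp add: Tobj_def\<close>)
  then show ?thesis
    using assms(4) grams by simp
qed

lemma duals_invariant:
  assumes "i \<in> {1..N}" "j \<in> Nb i" "k \<in> {1..K}"
  shows "U t i j k \<in> carrier_mat d d \<and> V t i j k \<in> carrier_mat d d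
    \<and> U t i j k + V t i j k = 0\<^sub>m d d \<and> U t i j k = V t j i k"
  using assms
proof (induction t arbitrary: i j k)
  case 0
  then show ?case
    using U_0 V_0 U_0[OF neighbour_in_nodes neighbour_converse] V_0[OF neighbour_in_nodes neighbour_converse]
    by simp
next
  case (Suc t)
  have j: "j \<in> {1..N}" "i \<in> Nb j"
    using neighbour_in_nodes[OF Suc.prems(1,2)] neighbour_converse[OF Suc.prems(1,2)] .
  obtain U_car: "U t i j k \<in> carrier_mat d d" and V_car: "V t i j k \<in> carrier_mat d d"
    and cancel: "U t i j k + V t i j k = 0\<^sub>m d d" and swap: "U t i j k = V t j i k"
    using Suc.IH[OF Suc.prems] by blast
  have cancel_ji: "U t j i k + V t j i k = 0\<^sub>m d d"
    using Suc.IH[OF j Suc.prems(3)] by blast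
  define M where "M = (1/2) \<cdot>\<^sub>m (gram t i k + gram t j k)"
  have grams: "gram t i k \<in> carrier_mat d d" "gram t j k \<in> carrier_mat d d"
    using gram_carrier Suc.prems(1) j(1) by auto
  then have M: "M \<in> carrier_mat d d"
    by (simp add: M_def)
  have T_ij: "T t i j k = M"
    using T_step_if_duals_cancel[OF Suc.prems cancel] by (simp add: M_def)
  have T_ji: "T t j i k = M"
    using T_step_if_duals_cancel[OF j Suc.prems(3) cancel_ji] comm_add_mat[OF grams]
    by (simp add: M_def)
  have U': "U (Suc t) i j k = U t i j k + \<rho> \<cdot>\<^sub>m (gram t i k - M)"
    using U_step[OF Suc.prems] T_ij by simp
  have V': "V (Suc t) i j k = V t i j k + \<rho> \<cdot>\<^sub>m (gram t j k - M)"
    using V_step[OF Suc.prems] T_ij by simp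
  have V'_ji: "V (Suc t) j i k = V t j i k + \<rho> \<cdot>\<^sub>m (gram t i k - M)"
    using V_step[OF j Suc.prems(3)] T_ji by simp
  have "U (Suc t) i j k + V (Suc t) i j k = 0\<^sub>m d d"
    unfolding U' V' M_def by (rule midpoint_residuals_cancel[OF U_car V_car grams cancel])
  moreover have "U (Suc t) i j k = V (Suc t) j i k"
    unfolding U' V'_ji swap ..
  moreover have "U (Suc t) i j k \<in> carrier_mat d d" "V (Suc t) i j k \<in> carrier_mat d d"
    using grams M by (simp_all add: U' V' add_carrier_mat minus_carrier_mat)
  ultimately show ?case by blast
qed

lemma T_step_midpoint:
  assumes "i \<in> {1..N}" "j \<in> Nb i" "k \<in> {1..K}"
  shows "T t i j k = (1/2) \<cdot>\<^sub>m (gram t i k + gram t j k)"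
  using T_step_if_duals_cancel[OF assms] duals_invariant[OF assms] by blast

lemma T_step_symmetric:
  assumes "i \<in> {1..N}" "j \<in> Nb i" "k \<in> {1..K}"
  shows "T t j i k = T t i j k"
proof -
  have j: "j \<in> {1..N}" "i \<in> Nb j"
    using neighbour_in_nodes[OF assms(1,2)] neighbour_converse[OF assms(1,2)] .
  show ?thesis
    using T_step_midpoint[OF assms] T_step_midpoint[OF j assms(3)]
      comm_add_mat[OF gram_carrier[OF assms(1)] gram_carrier[OF j(1)]] by simp
qed

lemma Y_0:
  assumes "i \<in> {1..N}" "j \<in> Nb i" "k \<in> {1..K}"
  shows "Y 0 i j k = 0\<^sub>m d d"
  using U_0[OF assms] V_0[OF neighbour_in_nodes[OF assms(1,2)] neighbour_converse[OF assms(1,2)] assms(3)]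
  by simp

lemma U_eq_V_swapped:
  assumes "i \<in> {1..N}" "j \<in> Nb i" "k \<in> {1..K}"
  shows "U t i j k = V t j i k"
  using duals_invariant[OF assms] by blast

lemma Y_eq_double_U:
  assumes "i \<in> {1..N}" "j \<in> Nb i" "k \<in> {1..K}"
  shows "Y t i j k = 2 \<cdot>\<^sub>m U t i j k"
proof -
  have "U t i j k \<in> carrier_mat d d"
    using duals_invariant[OF assms] by blast
  then show ?thesis
    unfolding U_eq_V_swapped[OF assms, symmetric] by (intro eq_matI) auto
qed

lemma Y_step:
  assumes "i \<in> {1..N}" "j \<in> Nb i" "k \<in> {1..K}"
  shows "Y (Suc t) i j k = Y t i j k + \<rho> \<cdot>\<^sub>m (gram t i k - gram t j k)"
proof -
  have j: "j \<in> {1..N}" "i \<in> Nb j"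
    using neighbour_in_nodes[OF assms(1,2)] neighbour_converse[OF assms(1,2)] .
  have carriers: "U t i j k \<in> carrier_mat d d" "V t j i k \<in> carrier_mat d d"
    "gram t i k \<in> carrier_mat d d" "gram t j k \<in> carrier_mat d d"
    using duals_invariant[OF assms] duals_invariant[OF j assms(3)] gram_carrier assms(1) j(1)
    by auto
  have "U (Suc t) i j k = U t i j k + \<rho> \<cdot>\<^sub>m (gram t i k - T t i j k)"
    "V (Suc t) j i k = V t j i k + \<rho> \<cdot>\<^sub>m (gram t i k - T t i j k)"
    using U_step[OF assms] V_step[OF j assms(3)] T_step_symmetric[OF assms] by simp_all
  then show ?thesis
    unfolding T_step_midpoint[OF assms] using carriers
    by (intro eq_matI) (simp_all add: algebra_simps)
qed

lemma Lag_eq_sum_Lloc: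
  obtains c where "\<And>Z. feas d N K m lab Z \<Longrightarrow>
      Lag d eps \<gamma> N Nb K m lab Z (T t) (U (Suc t)) (V (Suc t))
        = (\<Sum>i\<in>{1..N}. Lloc d eps \<gamma> N Nb K m lab (Zs t) i (Y (Suc t) i) (Z i)) + c"
proof -
  define c where "c = (\<Sum>i\<in>{1..N}. \<Sum>j\<in>Nb i. \<Sum>k\<in>{1..K}.
    mtr (transpose_mat (Y (Suc t) i j k) * (gram t j k - T t i j k)))"
  have "Lag d eps \<gamma> N Nb K m lab Z (T t) (U (Suc t)) (V (Suc t))
      = (\<Sum>i\<in>{1..N}. Lloc d eps \<gamma> N Nb K m lab (Zs t) i (Y (Suc t) i) (Z i)) + c"
    if feasible: "feas d N K m lab Z" for Z
  proof -
    let ?X = "\<lambda>i k. Anrm m lab i (Z i) k"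
    have edge_term: "mtr (transpose_mat (U (Suc t) i j k) * (?X i k - T t i j k))
          + \<gamma> / 2 * fro2 (?X i k - T t i j k)
        + (mtr (transpose_mat (V (Suc t) j i k) * (?X i k - T t j i k))
          + \<gamma> / 2 * fro2 (?X i k - T t j i k))
      = mtr (transpose_mat (Y (Suc t) i j k) * (?X i k - gram t j k))
          + \<gamma> * fro2 (?X i k - (1/2) \<cdot>\<^sub>m (gram t i k + gram t j k))
        + mtr (transpose_mat (Y (Suc t) i j k) * (gram t j k - T t i j k))"
      if i: "i \<in> {1..N}" and j: "j \<in> Nb i" and k: "k \<in> {1..K}" for i j k
    proof -
      have j': "j \<in> {1..N}" "i \<in> Nb j"
        using neighbour_in_nodes[OF i j] neighbour_converse[OF i j] .
      have "?X i k \<in> carrier_mat d d"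
        using feasible i by (auto simp: feas_def feas_node_def intro: Anrm_carrier)
      then show ?thesis
        unfolding T_step_symmetric[OF i j k] T_step_midpoint[OF i j k, symmetric]
        using duals_invariant[OF i j k] duals_invariant[OF j' k] gram_carrier[OF j'(1)]
          T_carrier[OF i j k] by (intro dual_terms_merge) auto
    qed
    have "Lag d eps \<gamma> N Nb K m lab Z (T t) (U (Suc t)) (V (Suc t))
      = (\<Sum>i\<in>{1..N}. Ric d eps N K m lab i (Z i) - Ri d eps N m i (Z i)
          + (\<Sum>j\<in>Nb i. \<Sum>k\<in>{1..K}.
              mtr (transpose_mat (Y (Suc t) i j k) * (?X i k - gram t j k))
                + \<gamma> * fro2 (?X i k - (1/2) \<cdot>\<^sub>m (gram t i k + gram t j k))
              + mtr (transpose_mat (Y (Suc t) i j k) * (gram t j k - T t i j k))))"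
      by (subst Lag_regroup_by_node) (use neighbours_subset in blast,
          use neighbours_symmetric in blast, simp only: edge_term cong: sum.cong)
    then show ?thesis
      unfolding Lloc_def c_def by (simp add: sum.distrib)
  qed
  then show thesis
    by (rule that)
qed

lemma Z_step_decouples:
  assumes "feas d N K m lab Z"
  shows "(\<forall>Z'. feas d N K m lab Z' \<longrightarrow>
      Lag d eps \<gamma> N Nb K m lab Z (T t) (U (Suc t)) (V (Suc t))
        \<le> Lag d eps \<gamma> N Nb K m lab Z' (T t) (U (Suc t)) (V (Suc t)))
    \<longleftrightarrow> (\<forall>i\<in>{1..N}. \<forall>Zi'. feas_node d K m lab i Zi' \<longrightarrow>
      Lloc d eps \<gamma> N Nb K m lab (Zs t) i (Y (Suc t) i) (Z i)
        \<le> Lloc d eps \<gamma> N Nb K m lab (Zs t) i (Y (Suc t) i) Zi')"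
proof -
  obtain c where "\<And>Z. feas d N K m lab Z \<Longrightarrow>
      Lag d eps \<gamma> N Nb K m lab Z (T t) (U (Suc t)) (V (Suc t))
        = (\<Sum>i\<in>{1..N}. Lloc d eps \<gamma> N Nb K m lab (Zs t) i (Y (Suc t) i) (Z i)) + c"
    using Lag_eq_sum_Lloc[where eps = eps and t = t] by blast
  then show ?thesis
    using assms unfolding feas_def by (intro minimizer_of_separable_sum_iff) auto
qed

end

theorem proposition1:
  fixes N K d :: nat and Nb :: "nat \<Rightarrow> nat set"
    and m :: "nat \<Rightarrow> nat" and lab :: "nat \<Rightarrow> nat \<Rightarrow> nat"
    and eps \<gamma> \<rho> :: real
    and Zs :: "nat \<Rightarrow> nat \<Rightarrow> real mat"
    and T U V :: "nat \<Rightarrow> nat \<Rightarrow> nat \<Rightarrow> nat \<Rightarrow> real mat"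
  assumes graph: "conn_undirected N Nb"
    and labels: "\<forall>i\<in>{1..N}. \<forall>c<m i. lab i c \<in> {1..K}"
    and mk_pos: "\<forall>i\<in>{1..N}. \<forall>k\<in>{1..K}. mk m lab i k \<ge> 1"
    and eps_pos: "eps > 0" and gamma_pos: "\<gamma> > 0" and rho_pos: "\<rho> > 0"
    and Z0: "feas d N K m lab (Zs 0)"
    and U0: "\<forall>i\<in>{1..N}. \<forall>j\<in>Nb i. \<forall>k\<in>{1..K}. U 0 i j k = 0\<^sub>m d d"
    and V0: "\<forall>i\<in>{1..N}. \<forall>j\<in>Nb i. \<forall>k\<in>{1..K}. V 0 i j k = 0\<^sub>m d d"
    and Tstep: "\<forall>t. \<forall>i\<in>{1..N}. \<forall>j\<in>Nb i. \<forall>k\<in>{1..K}.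
                  T t i j k \<in> carrier_mat d d \<and>
                  (\<forall>T'\<in>carrier_mat d d.
                     Tobj \<gamma> m lab (Zs t) (U t) (V t) i j k (T t i j k)
                       \<le> Tobj \<gamma> m lab (Zs t) (U t) (V t) i j k T')"
    and Ustep: "\<forall>t. \<forall>i\<in>{1..N}. \<forall>j\<in>Nb i. \<forall>k\<in>{1..K}.
                  U (Suc t) i j k = U t i j k + \<rho> \<cdot>\<^sub>m (Anrm m lab i (Zs t i) k - T t i j k)"
    and Vstep: "\<forall>t. \<forall>i\<in>{1..N}. \<forall>j\<in>Nb i. \<forall>k\<in>{1..K}.
                  V (Suc t) i j k = V t i j k + \<rho> \<cdot>\<^sub>m (Anrm m lab j (Zs t j) k - T t i j k)"
    and Zstep: "\<forall>t. feas d N K m lab (Zs (Suc t)) \<and>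
                  (\<forall>Z. feas d N K m lab Z \<longrightarrow>
                     Lag d eps \<gamma> N Nb K m lab (Zs (Suc t)) (T t) (U (Suc t)) (V (Suc t))
                       \<le> Lag d eps \<gamma> N Nb K m lab Z (T t) (U (Suc t)) (V (Suc t)))"
  shows "(\<forall>t. \<forall>i\<in>{1..N}. \<forall>j\<in>Nb i. \<forall>k\<in>{1..K}.
            U t i j k = V t j i k \<and> U t i j k + V t j i k = 2 \<cdot>\<^sub>m U t i j k)
       \<and> (\<forall>i\<in>{1..N}. \<forall>j\<in>Nb i. \<forall>k\<in>{1..K}. U 0 i j k + V 0 j i k = 0\<^sub>m d d)
       \<and> (\<forall>t. \<forall>i\<in>{1..N}. \<forall>j\<in>Nb i. \<forall>k\<in>{1..K}.
            U (Suc t) i j k + V (Suc t) j i k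
              = (U t i j k + V t j i k)
                + \<rho> \<cdot>\<^sub>m (Anrm m lab i (Zs t i) k - Anrm m lab j (Zs t j) k))
       \<and> (\<forall>t. \<forall>Z. feas d N K m lab Z \<longrightarrow>
            ((\<forall>Z'. feas d N K m lab Z' \<longrightarrow>
                 Lag d eps \<gamma> N Nb K m lab Z (T t) (U (Suc t)) (V (Suc t))
                   \<le> Lag d eps \<gamma> N Nb K m lab Z' (T t) (U (Suc t)) (V (Suc t)))
             \<longleftrightarrow>
             (\<forall>i\<in>{1..N}. \<forall>Zi'. feas_node d K m lab i Zi' \<longrightarrow>
                 Lloc d eps \<gamma> N Nb K m lab (Zs t) i
                      (\<lambda>j k. U (Suc t) i j k + V (Suc t) j i k) (Z i)
                   \<le> Lloc d eps \<gamma> N Nb K m lab (Zs t) i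
                      (\<lambda>j k. U (Suc t) i j k + V (Suc t) j i k) Zi')))"
proof -
  have feasible: "feas d N K m lab (Zs t)" for t
    using Z0 Zstep by (cases t) auto
  interpret admm_iteration N K d Nb m lab \<gamma> \<rho> Zs T U V
    using graph gamma_pos feasible U0 V0 Tstep Ustep Vstep
    by unfold_locales (auto simp: conn_undirected_def)
  show ?thesis
    by (intro conjI allI ballI impI U_eq_V_swapped Y_eq_double_U Y_0 Y_step Z_step_decouples)
qed

end
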